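(* Let $(A,B,\mathfrak H)$ be a P-module and $X\in\{F,T,V,\mathcal O\}$. Then $\mathfrak H_{\mathrm{atom}}=\bigoplus_{[p]}\mathfrak H_{\mathrm{atom}}^{[p]}$ and $\Pi^X(\mathfrak H_{\mathrm{atom}})\cong\bigoplus_{[p]}\Pi^X(\mathfrak H_{\mathrm{atom}}^{[p]})$, where the direct sums run over all equivalence classes $[p]$ of periodic rays whose period has length at most $\dim(\mathfrak H_{\mathrm{atom}})$.
   Context: A P-module is $(A,B,\mathfrak H)$ with $\mathfrak H$ finite-dimensional complex Hilbert, $A^*A+B^*B=\mathrm{id}$. Sub-module: subspace invariant under $A,B$; irreducible: no sub-modules besides $\{0\}$ and itself. $\mathfrak H=\mathfrak H_{\mathrm{comp}}\oplus\mathfrak H_{\mathrm{res}}$ orthogonally, where $\mathfrak H_{\mathrm{comp}}$ is a direct sum of irreducible sub-modules and $\mathfrak H_{\mathrm{res}}$ contains no non-zero sub-module. Rays: infinite binary sequences $p=x_1x_2\cdots$; $p_n=x_1\cdots x_n$, ${}_np=x_{n+1}x_{n+2}\cdots$; $w\xi:=X_{x_n}\cdots X_{x_1}\xi$ for $w=x_1\cdots x_n$, $X_0=A,X_1=B$. Non-zero $\xi$ is contained in $p$ if $\|p_n\xi\|=\|\xi\|$ for all $n$. Periodic ray: $w^\infty$; its period length is the length of the shortest such $w$. $p\sim q$ if ${}_np={}_kq$ for some $n,k$; $[p]$ is the class. $\mathfrak H_{\mathrm{atom}}=\mathrm{span}\{\xi\in\mathfrak H_{\mathrm{comp}}:\xi\text{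 contained in a periodic ray}\}$ and, for periodic $p$, $\mathfrak H_{\mathrm{atom}}^{[p]}=\mathrm{span}\{\xi\in\mathfrak H_{\mathrm{atom}}:\xi\text{ contained in }{}_kp\text{ for some }k\}$ (a sub-module depending only on $[p]$). $\Pi^X(\mathfrak K)$: the Pythagorean representation of $X$ built from a sub-module $\mathfrak K$ with restricted operators: for finite rooted full binary trees $t$ with leaves $\ell_1<\dots<\ell_n$ put $\mathfrak K_t=\mathfrak K^n$; attaching a caret at a leaf $\ell$ replaces $\xi_\ell$ by $A\xi_\ell,B\xi_\ell$ at $\ell0,\ell1$; $\mathscr H$ is the completed inductive limit with classes $[t,\xi]$. $V$ consists of homeomorphisms $g$ of $\{0,1\}^{\mathbf N}$ with $g(u_i\cdot x)=v_{\kappa(i)}\cdot x$ for leaves $u_i$ of a tree $s$, $v_i$ of a tree $t$, permutation $\kappa$ ($F$: $\kappa$ trivial; $T$: $\kappa$ cyclic), acting by $g[s,\xi]=[t,\eta]$, $\eta_{v_{\kappa(i)}}=\xi_{u_i}$. The Cuntz algebra $\mathcal O$ acts by $s_i\mapsto\tau_i^*$, $\tau_i[t,\xi]=[t_i,\xi|_{t_i}]$ with $t_i$ the subtree rooted at vertex $i$. $\cong$ is unitary equivalence. *)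

theory Defs
  imports "HOL-Analysis.Analysis"
begin

type_synonym 'n cmat = "complex^'n^'n"
type_synonym 'n cvec = "complex^'n"

definition cinner :: "'n::finite cvec \<Rightarrow> 'n cvec \<Rightarrow> complex" where
  "cinner x y = (\<Sum>i\<in>UNIV. cnj (x$i) * y$i)"

definition cadj :: "'n::finite cmat \<Rightarrow> 'n cmat" where
  "cadj M = (\<chi> i j. cnj (M$j$i))"

definition pmodule :: "'n::finite cmat \<Rightarrow> 'n cmat \<Rightarrow> bool" where
  "pmodule A B \<longleftrightarrow> cadj A ** A + cadj B ** B = mat 1"

definition submodule :: "'n::finite cmat \<Rightarrow> 'n cmat \<Rightarrow> 'n cvec set \<Rightarrow> bool" where
  "submodule A B K \<longleftrightarrow> vec.subspace K \<and> (\<forall>x\<in>K. A *v x \<in> K \<and> B *v x \<in> K)"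

definition irreducible_sub :: "'n::finite cmat \<Rightarrow> 'n cmat \<Rightarrow> 'n cvec set \<Rightarrow> bool" where
  "irreducible_sub A B K \<longleftrightarrow> submodule A B K \<and> K \<noteq> {0} \<and>
     (\<forall>K'. submodule A B K' \<and> K' \<subseteq> K \<longrightarrow> K' = {0} \<or> K' = K)"

definition Hcomp :: "'n::finite cmat \<Rightarrow> 'n cmat \<Rightarrow> 'n cvec set" where
  "Hcomp A B = vec.span (\<Union>{K. irreducible_sub A B K})"

text \<open>w xi = X_{x_n} ... X_{x_1} xi for w = x_1...x_n, X_False = A, X_True = B.\<close>
fun wact :: "'n::finite cmat \<Rightarrow> 'n cmat \<Rightarrow> bool list \<Rightarrow> 'n cvec \<Rightarrow> 'n cvec" where
  "wact A B [] v = v"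
| "wact A B (x # w) v = wact A B w ((if x then B else A) *v v)"

type_synonym ray = "nat \<Rightarrow> bool"

definition rprefix :: "ray \<Rightarrow> nat \<Rightarrow> bool list" where
  "rprefix p n = map p [0..<n]"

definition rshift :: "nat \<Rightarrow> ray \<Rightarrow> ray" where
  "rshift n p = (\<lambda>i. p (i + n))"

definition contained :: "'n::finite cmat \<Rightarrow> 'n cmat \<Rightarrow> 'n cvec \<Rightarrow> ray \<Rightarrow> bool" where
  "contained A B \<xi> p \<longleftrightarrow> \<xi> \<noteq> 0 \<and> (\<forall>n. norm (wact A B (rprefix p n) \<xi>) = norm \<xi>)"

definition has_period_word :: "ray \<Rightarrow> bool list \<Rightarrow> bool" where
  "has_period_word p w \<longleftrightarrow> w \<noteq> [] \<and> (\<forall>i. p i = w ! (i mod length w))"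

definition periodic :: "ray \<Rightarrow> bool" where
  "periodic p \<longleftrightarrow> (\<exists>w. has_period_word p w)"

definition period_len :: "ray \<Rightarrow> nat" where
  "period_len p = (LEAST k. \<exists>w. has_period_word p w \<and> length w = k)"

definition ray_equiv :: "ray \<Rightarrow> ray \<Rightarrow> bool" where
  "ray_equiv p q \<longleftrightarrow> (\<exists>n k. rshift n p = rshift k q)"

definition ray_class :: "ray \<Rightarrow> ray set" where
  "ray_class p = {q. ray_equiv p q}"

definition Hatom :: "'n::finite cmat \<Rightarrow> 'n cmat \<Rightarrow> 'n cvec set" where
  "Hatom A B = vec.span {\<xi>\<in>Hcomp A B. \<exists>p. periodic p \<and> contained A B \<xi> p}"

definition Hatom_ray :: "'n::finite cmat \<Rightarrow> 'n cmat \<Rightarrow> ray \<Rightarrow> 'n cvec set" where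
  "Hatom_ray A B p = vec.span {\<xi>\<in>Hatom A B. \<exists>k. contained A B \<xi> (rshift k p)}"

text \<open>H_atom^[p] for a class c (via any periodic representative; it only depends on the class).\<close>
definition Hatom_class :: "'n::finite cmat \<Rightarrow> 'n cmat \<Rightarrow> ray set \<Rightarrow> 'n cvec set" where
  "Hatom_class A B c = Hatom_ray A B (SOME p. periodic p \<and> ray_class p = c)"

definition atom_classes :: "'n::finite cmat \<Rightarrow> 'n cmat \<Rightarrow> ray set set" where
  "atom_classes A B = {ray_class p | p. periodic p \<and> period_len p \<le> vec.dim (Hatom A B)}"

definition orth_dsum :: "'n::finite cvec set \<Rightarrow> 'i set \<Rightarrow> ('i \<Rightarrow> 'n cvec set) \<Rightarrow> bool" where
  "orth_dsum H I S \<longleftrightarrow>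
     (\<forall>i\<in>I. \<forall>j\<in>I. i \<noteq> j \<longrightarrow> (\<forall>x\<in>S i. \<forall>y\<in>S j. cinner x y = 0)) \<and>
     H = vec.span (\<Union>i\<in>I. S i)"

datatype tree = Lf | Nd tree tree

fun leaves :: "tree \<Rightarrow> bool list list" where
  "leaves Lf = [[]]"
| "leaves (Nd l r) = map (Cons False) (leaves l) @ map (Cons True) (leaves r)"

fun depth :: "tree \<Rightarrow> nat" where
  "depth Lf = 0"
| "depth (Nd l r) = Suc (max (depth l) (depth r))"

text \<open>An element [t_N, f] with t_N the complete binary tree of depth N; f gives the
  vector at the leaf w (length w = N). Every class [t, xi] has such a representative.\<close>
type_synonym 'n elt = "nat \<times> (bool list \<Rightarrow> 'n cvec)"

definition PiD :: "'n::finite cvec set \<Rightarrow> 'n elt set" where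
  "PiD K = {x. \<forall>w. length w = fst x \<longrightarrow> snd x w \<in> K}"

text \<open>Value at a word w with length w >= fst x after attaching carets.\<close>
definition expd :: "'n::finite cmat \<Rightarrow> 'n cmat \<Rightarrow> 'n elt \<Rightarrow> bool list \<Rightarrow> 'n cvec" where
  "expd A B x w = wact A B (drop (fst x) w) (snd x (take (fst x) w))"

definition pip :: "'n::finite cmat \<Rightarrow> 'n cmat \<Rightarrow> 'n elt \<Rightarrow> 'n elt \<Rightarrow> complex" where
  "pip A B x y = (let L = max (fst x) (fst y) in
     \<Sum>w\<in>{w. length w = L}. cinner (expd A B x w) (expd A B y w))"

text \<open>Action of the element of V given by tree pair (s,t) and permutation kappa:
  g[s,xi] = [t,eta], eta_{v_kappa(i)} = xi_{u_i}.\<close>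
definition gact :: "'n::finite cmat \<Rightarrow> 'n cmat \<Rightarrow> tree \<Rightarrow> tree \<Rightarrow> (nat \<Rightarrow> nat) \<Rightarrow> 'n elt \<Rightarrow> 'n elt" where
  "gact A B s t \<kappa> x = (let N' = max (fst x) (depth s); us = leaves s; vs = leaves t;
      M = N' + depth t in
     (M, \<lambda>w. let j = (THE j. j < length vs \<and> take (length (vs!j)) w = vs!j);
                 i = inv_into {..<length us} \<kappa> j;
                 z = drop (length (vs!j)) w;
                 L = N' - length (us!i)
             in wact A B (drop L z) (expd A B x (us!i @ take L z))))"

definition sstar :: "bool \<Rightarrow> 'n::finite elt \<Rightarrow> 'n elt" where
  "sstar b x = (Suc (fst x), \<lambda>w. if w \<noteq> [] \<and> hd w = b then snd x (tl w) else 0)"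

datatype gen = GElt tree tree "nat \<Rightarrow> nat" | CGen bool

datatype kind = KF | KT | KV | KO

definition gens :: "kind \<Rightarrow> gen set" where
  "gens X = (case X of
     KF \<Rightarrow> {GElt s t \<kappa> | s t \<kappa>. length (leaves s) = length (leaves t) \<and> (\<forall>i. \<kappa> i = i)}
   | KT \<Rightarrow> {GElt s t \<kappa> | s t \<kappa>. length (leaves s) = length (leaves t) \<and>
             \<kappa> permutes {..<length (leaves s)} \<and>
             (\<exists>k. \<forall>i<length (leaves s). \<kappa> i = (i + k) mod length (leaves s))}
   | KV \<Rightarrow> {GElt s t \<kappa> | s t \<kappa>. length (leaves s) = length (leaves t) \<and>
             \<kappa> permutes {..<length (leaves s)}}
   | KO \<Rightarrow> range CGen)"

definition pop :: "'n::finite cmat \<Rightarrow> 'n cmat \<Rightarrow> gen \<Rightarrow> 'n elt \<Rightarrow> 'n elt" where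
  "pop A B \<gamma> x = (case \<gamma> of GElt s t \<kappa> \<Rightarrow> gact A B s t \<kappa> x | CGen b \<Rightarrow> sstar b x)"

text \<open>A pre-Hilbert space is a carrier D with a (semi-)inner product ip; its completion
  consists of Cauchy sequences modulo null sequences. Operators act termwise.\<close>

definition dsq :: "('d \<Rightarrow> 'd \<Rightarrow> complex) \<Rightarrow> 'd \<Rightarrow> 'd \<Rightarrow> complex" where
  "dsq ip x y = ip x x - ip x y - ip y x + ip y y"

definition cauchy_in :: "'d set \<Rightarrow> ('d \<Rightarrow> 'd \<Rightarrow> complex) \<Rightarrow> (nat \<Rightarrow> 'd) \<Rightarrow> bool" where
  "cauchy_in D ip X \<longleftrightarrow> (\<forall>k. X k \<in> D) \<and>
     (\<forall>e>0. \<exists>M. \<forall>m\<ge>M. \<forall>n\<ge>M. cmod (dsq ip (X m) (X n)) < e)"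

definition ceq :: "('d \<Rightarrow> 'd \<Rightarrow> complex) \<Rightarrow> (nat \<Rightarrow> 'd) \<Rightarrow> (nat \<Rightarrow> 'd) \<Rightarrow> bool" where
  "ceq ip X Y \<longleftrightarrow> (\<lambda>k. dsq ip (X k) (Y k)) \<longlonglongrightarrow> 0"

definition cip :: "('d \<Rightarrow> 'd \<Rightarrow> complex) \<Rightarrow> (nat \<Rightarrow> 'd) \<Rightarrow> (nat \<Rightarrow> 'd) \<Rightarrow> complex" where
  "cip ip X Y = lim (\<lambda>k. ip (X k) (Y k))"

definition unit_equiv ::
  "'g set \<Rightarrow> 'd set \<Rightarrow> ('d \<Rightarrow> 'd \<Rightarrow> complex) \<Rightarrow> ('g \<Rightarrow> 'd \<Rightarrow> 'd)
          \<Rightarrow> 'e set \<Rightarrow> ('e \<Rightarrow> 'e \<Rightarrow> complex) \<Rightarrow> ('g \<Rightarrow> 'e \<Rightarrow> 'e) \<Rightarrow> bool" where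
  "unit_equiv G D1 ip1 op1 D2 ip2 op2 \<longleftrightarrow> (\<exists>U.
     (\<forall>X. cauchy_in D1 ip1 X \<longrightarrow> cauchy_in D2 ip2 (U X)) \<and>
     (\<forall>X Y. cauchy_in D1 ip1 X \<longrightarrow> cauchy_in D1 ip1 Y \<longrightarrow> cip ip2 (U X) (U Y) = cip ip1 X Y) \<and>
     (\<forall>Y. cauchy_in D2 ip2 Y \<longrightarrow> (\<exists>X. cauchy_in D1 ip1 X \<and> ceq ip2 (U X) Y)) \<and>
     (\<forall>g\<in>G. \<forall>X. cauchy_in D1 ip1 X \<longrightarrow>
         ceq ip2 (U (\<lambda>k. op1 g (X k))) (\<lambda>k. op2 g (U X k))))"

text \<open>Pi^X(K) as pre-Hilbert data, and finite orthogonal direct sums of such.\<close>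
definition Pi_equiv_sum :: "'n::finite cmat \<Rightarrow> 'n cmat \<Rightarrow> kind \<Rightarrow> 'n cvec set
     \<Rightarrow> 'i set \<Rightarrow> ('i \<Rightarrow> 'n cvec set) \<Rightarrow> bool" where
  "Pi_equiv_sum A B X K I S \<longleftrightarrow>
     unit_equiv (gens X) (PiD K) (pip A B) (pop A B)
       {x. \<forall>i\<in>I. x i \<in> PiD (S i)} (\<lambda>x y. \<Sum>i\<in>I. pip A B (x i) (y i)) (\<lambda>\<gamma> x i. pop A B \<gamma> (x i))"

end

theory Submission
  imports Defs
begin

(* Two vectors contained in different rays are orthogonal: at the first letter where the rays
   differ, A^*A + B^*B = 1 forces one of A, B to kill each vector, and before that letter both
   vectors are moved by the same isometries. Hence the spaces H_atom^[p] of inequivalent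
   classes are orthogonal. A vector xi contained in a periodic ray q lies in H_atom^[q]; the
   vectors w xi, for the prefixes w of q shorter than its period, are contained in pairwise
   different shifts of q, so they are pairwise orthogonal non-zero vectors of H_atom and the
   period of q is at most dim H_atom. Thus the classes of the index set span H_atom.
   Each summand is invariant under A and B, so the components of the orthogonal decomposition
   commute with A and B. Taking components leaf by leaf therefore maps Pi^X(H_atom)
   isometrically onto the direct sum, and it intertwines every generator of F, T, V and O,
   since all of them act on leaf vectors through words in A and B. *)

lemma cinner_add_left: "cinner (x + y) z = cinner x z + cinner y z"
  by (simp add: cinner_def sum.distrib distrib_right)

lemma cinner_add_right: "cinner x (y + z) = cinner x y + cinner x z"
  by (simp add: cinner_def sum.distrib distrib_left)

lemma cinner_scale_left: "cinner (c *s x) y = cnj c * cinner x y"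
  by (simp add: cinner_def sum_distrib_left mult.assoc)

lemma cinner_scale_right: "cinner x (c *s y) = c * cinner x y"
  by (simp add: cinner_def sum_distrib_left mult.left_commute)

lemma cinner_zero_left [simp]: "cinner 0 y = 0"
  by (simp add: cinner_def)

lemma cinner_zero_right [simp]: "cinner x 0 = 0"
  by (simp add: cinner_def)

lemma cinner_sum_left: "cinner (sum f S) y = (\<Sum>i\<in>S. cinner (f i) y)"
  by (induction S rule: infinite_finite_induct) (auto simp: cinner_add_left)

lemma cinner_sum_right: "cinner x (sum f S) = (\<Sum>i\<in>S. cinner x (f i))"
  by (induction S rule: infinite_finite_induct) (auto simp: cinner_add_right)

lemma cinner_sum_right_single:
  assumes "finite I" "i \<in> I" "\<And>j. j \<in> I \<Longrightarrow> j \<noteq> i \<Longrightarrow> cinner x (f j) = 0"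
  shows "cinner x (\<Sum>j\<in>I. f j) = cinner x (f i)"
  by (subst cinner_sum_right, subst sum.remove[OF assms(1,2)]) (simp add: sum.neutral assms(3))

lemma cinner_adj: "cinner (M *v x) y = cinner x (cadj M *v y)"
proof -
  have "cinner (M *v x) y = (\<Sum>i\<in>UNIV. \<Sum>j\<in>UNIV. cnj (M$i$j) * cnj (x$j) * y$i)"
    by (simp add: cinner_def matrix_vector_mult_def sum_distrib_right)
  also have "\<dots> = (\<Sum>j\<in>UNIV. \<Sum>i\<in>UNIV. cnj (M$i$j) * cnj (x$j) * y$i)"
    by (rule sum.swap)
  also have "\<dots> = cinner x (cadj M *v y)"
    by (simp add: cinner_def matrix_vector_mult_def cadj_def sum_distrib_left mult_ac)
  finally show ?thesis .
qed

lemma cinner_self: "cinner x x = of_real ((norm x)\<^sup>2)"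
proof -
  have "(norm x)\<^sup>2 = (\<Sum>i\<in>UNIV. (cmod (x$i))\<^sup>2)"
    by (simp add: norm_vec_def L2_set_def sum_nonneg)
  then show ?thesis
    by (simp add: cinner_def complex_norm_square[symmetric] mult.commute)
qed

lemma cinner_self_eq_0_iff [simp]: "cinner x x = 0 \<longleftrightarrow> x = 0"
  by (simp add: cinner_self)

lemma span_orthogonal:
  assumes "\<And>x y. x \<in> G \<Longrightarrow> y \<in> H \<Longrightarrow> cinner x y = 0"
    and "x \<in> vec.span G" "y \<in> vec.span H"
  shows "cinner x y = 0"
proof -
  have orth_span: "\<forall>y\<in>vec.span H. cinner x y = 0" if "x \<in> G" for x
  proof
    fix y assume "y \<in> vec.span H"
    then show "cinner x y = 0"
      by (induction rule: vec.span_induct_alt)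
        (auto simp: cinner_add_right cinner_scale_right assms(1)[OF \<open>x \<in> G\<close>])
  qed
  from assms(2) have "\<forall>y\<in>vec.span H. cinner x y = 0"
    by (induction rule: vec.span_induct_alt)
      (auto simp: cinner_add_left cinner_scale_left orth_span)
  then show ?thesis using assms(3) by blast
qed

lemma orthogonal_independent:
  assumes "finite V" "0 \<notin> V" "\<And>v w. v \<in> V \<Longrightarrow> w \<in> V \<Longrightarrow> v \<noteq> w \<Longrightarrow> cinner v w = 0"
  shows "vec.independent V"
proof
  assume "vec.dependent V"
  then obtain u v where v: "v \<in> V" "u v \<noteq> 0" "(\<Sum>w\<in>V. u w *s w) = 0"
    using vec.dependent_finite[OF assms(1)] by blast
  have "0 = cinner v (\<Sum>w\<in>V. u w *s w)"
    using v(3) by simp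
  also have "\<dots> = cinner v (u v *s v)"
    using assms v(1) by (intro cinner_sum_right_single) (auto simp: cinner_scale_right)
  also have "\<dots> = u v * cinner v v"
    by (simp add: cinner_scale_right)
  finally show False
    using v assms(2) by auto
qed

lemma pmodule_cinner:
  assumes "pmodule A B"
  shows "cinner x y = cinner (A *v x) (A *v y) + cinner (B *v x) (B *v y)"
proof -
  have "cinner (A *v x) (A *v y) + cinner (B *v x) (B *v y)
      = cinner x ((cadj A ** A + cadj B ** B) *v y)"
    by (simp add: cinner_adj matrix_vector_mul_assoc cinner_add_right matrix_vector_mult_add_rdistrib)
  also have "\<dots> = cinner x y"
    using assms by (simp add: pmodule_def)
  finally show ?thesis by simp
qed

lemma pmodule_norm_sq:
  assumes "pmodule A B"
  shows "(norm x)\<^sup>2 = (norm (A *v x))\<^sup>2 + (norm (B *v x))\<^sup>2"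
  using pmodule_cinner[OF assms, of x x] unfolding cinner_self of_real_add[symmetric] of_real_eq_iff .

section \<open>Vectors contained in rays\<close>

abbreviation Xop :: "'n::finite cmat \<Rightarrow> 'n cmat \<Rightarrow> bool \<Rightarrow> 'n cmat" where
  "Xop A B b \<equiv> if b then B else A"

lemma wact_append: "wact A B (u @ v) x = wact A B v (wact A B u x)"
  by (induction u arbitrary: x) auto

lemma wact_snoc: "wact A B (u @ [b]) x = Xop A B b *v wact A B u x"
  by (simp add: wact_append)

lemma rprefix_Suc: "rprefix p (Suc n) = rprefix p n @ [p n]"
  by (simp add: rprefix_def)

lemma rprefix_Suc_Cons: "rprefix p (Suc n) = p 0 # rprefix (rshift 1 p) n"
  by (simp add: rprefix_def rshift_def map_upt_Suc del: upt_Suc)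

lemma rshift_0 [simp]: "rshift 0 p = p"
  by (simp add: rshift_def)

lemma rshift_rshift: "rshift a (rshift b p) = rshift (a + b) p"
  by (simp add: rshift_def add.assoc)

lemma contained_first_letter_norm:
  assumes "contained A B \<xi> p"
  shows "norm (Xop A B (p 0) *v \<xi>) = norm \<xi>"
  using assms unfolding contained_def by (metis rprefix_Suc_Cons rprefix_def list.map(1) upt_0 wact.simps)

lemma contained_other_letter_zero:
  assumes "pmodule A B" "contained A B \<xi> p"
  shows "Xop A B (\<not> p 0) *v \<xi> = 0"
proof -
  have "(norm (Xop A B (\<not> p 0) *v \<xi>))\<^sup>2 = 0"
    using pmodule_norm_sq[OF assms(1), of \<xi>] contained_first_letter_norm[OF assms(2)]
    by (cases "p 0") auto
  then show ?thesis by simp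
qed

lemma contained_shift:
  assumes "contained A B \<xi> p"
  shows "contained A B (Xop A B (p 0) *v \<xi>) (rshift 1 p)"
  unfolding contained_def
proof (intro conjI allI)
  show "Xop A B (p 0) *v \<xi> \<noteq> 0"
    using contained_first_letter_norm[OF assms] assms by (auto simp: contained_def)
  fix n
  have "norm (wact A B (rprefix p (Suc n)) \<xi>) = norm \<xi>"
    using assms by (simp add: contained_def)
  then show "norm (wact A B (rprefix (rshift 1 p) n) (Xop A B (p 0) *v \<xi>)) = norm (Xop A B (p 0) *v \<xi>)"
    using contained_first_letter_norm[OF assms] by (simp add: rprefix_Suc_Cons)
qed

lemma contained_letter:
  assumes "pmodule A B" "contained A B \<xi> p"
  shows "Xop A B b *v \<xi> = 0 \<or> contained A B (Xop A B b *v \<xi>) (rshift 1 p)"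
  using contained_other_letter_zero[OF assms] contained_shift[OF assms(2)] by (cases b; cases "p 0") auto

lemma contained_wact_rprefix:
  assumes "contained A B \<xi> p"
  shows "contained A B (wact A B (rprefix p m) \<xi>) (rshift m p)"
proof (induction m)
  case 0
  then show ?case using assms by (simp add: rprefix_def)
next
  case (Suc m)
  from contained_shift[OF Suc] show ?case
    by (simp add: rprefix_Suc wact_snoc rshift_rshift rshift_def)
qed

lemma contained_cinner:
  assumes "pmodule A B" "contained A B \<xi> p" "contained A B \<eta> q"
  shows "cinner \<xi> \<eta> = (if p 0 = q 0 then cinner (Xop A B (p 0) *v \<xi>) (Xop A B (q 0) *v \<eta>) else 0)"
  using pmodule_cinner[OF assms(1), of \<xi> \<eta>]
    contained_other_letter_zero[OF assms(1,2)] contained_other_letter_zero[OF assms(1,3)]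
  by (cases "p 0"; cases "q 0") auto

lemma contained_orthogonal:
  assumes pm: "pmodule A B" and "contained A B \<xi> p" "contained A B \<eta> q" "p \<noteq> q"
  shows "cinner \<xi> \<eta> = 0"
proof -
  obtain n where "p n \<noteq> q n"
    using assms(4) by auto
  then show ?thesis
    using assms(2,3)
  proof (induction n arbitrary: \<xi> \<eta> p q)
    case 0
    then show ?case using contained_cinner[OF pm "0.prems"(2,3)] by simp
  next
    case (Suc n)
    have "cinner (Xop A B (p 0) *v \<xi>) (Xop A B (q 0) *v \<eta>) = 0"
      using Suc.prems(1) contained_shift[OF Suc.prems(2)] contained_shift[OF Suc.prems(3)]
      by (intro Suc.IH) (simp_all add: rshift_def)
    then show ?case using contained_cinner[OF pm Suc.prems(2,3)] by metis
  qed
qed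

lemma submodule_Xop: "submodule A B K \<Longrightarrow> x \<in> K \<Longrightarrow> Xop A B b *v x \<in> K"
  by (simp add: submodule_def)

lemma submodule_wact: "submodule A B K \<Longrightarrow> x \<in> K \<Longrightarrow> wact A B w x \<in> K"
  by (induction w arbitrary: x) (auto simp: submodule_def)

lemma submodule_spanI:
  assumes "\<And>x b. x \<in> G \<Longrightarrow> Xop A B b *v x \<in> vec.span G"
  shows "submodule A B (vec.span G)"
  unfolding submodule_def
proof (intro conjI ballI vec.subspace_span)
  have gen: "A *v x \<in> vec.span G" "B *v x \<in> vec.span G" if "x \<in> G" for x
    using assms[OF that, of False] assms[OF that, of True] by simp_all
  fix x assume x: "x \<in> vec.span G"
  have "Xop A B b *v x \<in> vec.span G" for b
    using x by (induction rule: vec.span_induct_alt)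
      (auto simp: vec.span_zero matrix_vector_right_distrib vector_scalar_commute
        intro!: vec.span_add vec.span_scale intro: gen)
  from this[of False] this[of True] show "A *v x \<in> vec.span G" "B *v x \<in> vec.span G"
    by simp_all
qed

lemma submodule_span_Union:
  assumes "\<And>K. K \<in> \<K> \<Longrightarrow> submodule A B K"
  shows "submodule A B (vec.span (\<Union>\<K>))"
proof (rule submodule_spanI)
  fix x b assume "x \<in> \<Union>\<K>"
  then obtain K where "K \<in> \<K>" "x \<in> K" by blast
  then show "Xop A B b *v x \<in> vec.span (\<Union>\<K>)"
    using assms submodule_Xop by (blast intro: vec.span_base)
qed

lemma submodule_span_contained:
  assumes pm: "pmodule A B" and K: "submodule A B K" and R: "\<And>p. p \<in> R \<Longrightarrow> rshift 1 p \<in> R"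
  shows "submodule A B (vec.span {\<xi> \<in> K. \<exists>p\<in>R. contained A B \<xi> p})"
    (is "submodule A B (vec.span ?G)")
proof (rule submodule_spanI)
  fix \<xi> b assume "\<xi> \<in> ?G"
  then obtain p where \<xi>: "\<xi> \<in> K" "p \<in> R" "contained A B \<xi> p" by blast
  from contained_letter[OF pm \<xi>(3), of b] show "Xop A B b *v \<xi> \<in> vec.span ?G"
  proof
    assume "Xop A B b *v \<xi> = 0"
    then show ?thesis by (simp add: vec.span_zero)
  next
    assume "contained A B (Xop A B b *v \<xi>) (rshift 1 p)"
    then show ?thesis
      using submodule_Xop[OF K \<xi>(1)] R[OF \<xi>(2)] by (intro vec.span_base) blast
  qed
qed

section \<open>Periodic rays\<close>

lemma periodic_add_mult:
  fixes p :: "nat \<Rightarrow> 'a"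
  assumes "\<And>i. p (i + L) = p i"
  shows "p (i + k * L) = p i"
proof (induction k)
  case (Suc k)
  then show ?case using assms[of "i + k * L"] by (simp add: add_ac)
qed simp

lemma rshift_mult_period: "(\<And>i. p (i + L) = p i) \<Longrightarrow> rshift (k * L) p = p"
  by (auto simp: rshift_def periodic_add_mult)

lemma has_period_word_prefix:
  assumes "L > 0" "\<And>i. p (i + L) = p i"
  shows "has_period_word p (map p [0..<L])"
  unfolding has_period_word_def using assms(1)
  by (auto simp: periodic_add_mult[of p L, OF assms(2), of "i mod L" "i div L" for i, symmetric])

lemma periodic_iff: "periodic p \<longleftrightarrow> (\<exists>L>0. \<forall>i. p (i + L) = p i)"
proof
  assume "periodic p"
  then obtain w where "has_period_word p w"
    unfolding periodic_def by blast
  then have "length w > 0" "\<forall>i. p (i + length w) = p i"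
    by (auto simp: has_period_word_def)
  then show "\<exists>L>0. \<forall>i. p (i + L) = p i" by blast
next
  assume "\<exists>L>0. \<forall>i. p (i + L) = p i"
  then show "periodic p"
    unfolding periodic_def using has_period_word_prefix by blast
qed

lemma periodic_rshift: "periodic p \<Longrightarrow> periodic (rshift m p)"
  unfolding periodic_iff rshift_def by (metis add.commute add.left_commute)

lemma period_len_word:
  assumes "periodic p"
  obtains w where "has_period_word p w" "length w = period_len p"
proof -
  have "\<exists>k w. has_period_word p w \<and> length w = k"
    using assms unfolding periodic_def by blast
  from LeastI_ex[OF this] show ?thesis
    using that unfolding period_len_def by blast
qed

lemma period_len_pos: "periodic p \<Longrightarrow> period_len p > 0"
  by (metis gr0I has_period_word_def length_0_conv period_len_word)

lemma period_len_periodic: "periodic p \<Longrightarrow> p (i + period_len p) = p i"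
  by (metis has_period_word_def mod_add_self2 period_len_word)

lemma period_len_le:
  assumes "d > 0" "\<And>i. p (i + d) = p i"
  shows "period_len p \<le> d"
  unfolding period_len_def using has_period_word_prefix[of d p, OF assms] by (intro Least_le) auto

lemma rshift_unshift:
  assumes "L > 0" "\<And>i. p (i + L) = p i"
  shows "rshift (n * L - n) (rshift n p) = p"
proof -
  have "n \<le> n * L"
    using assms(1) by simp
  then have "rshift (n * L - n) (rshift n p) = rshift (n * L) p"
    by (simp add: rshift_rshift)
  also have "\<dots> = p"
    using assms(2) by (rule rshift_mult_period)
  finally show ?thesis .
qed

lemma periodic_equiv_shift:
  assumes "periodic p" "ray_equiv p q"
  shows "\<exists>j. p = rshift j q"
proof -
  obtain n k where nk: "rshift n p = rshift k q"
    using assms(2) unfolding ray_equiv_def by blast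
  let ?L = "period_len p"
  have "p = rshift (n * ?L - n) (rshift n p)"
    using rshift_unshift period_len_pos period_len_periodic assms(1) by metis
  then have "p = rshift (n * ?L - n + k) q"
    by (simp add: nk rshift_rshift)
  then show ?thesis ..
qed

lemma rshift_inj_on_period:
  assumes "periodic q" "m < period_len q" "m' < period_len q" "rshift m q = rshift m' q"
  shows "m = m'"
proof -
  let ?L = "period_len q"
  have False if "a < b" "b < ?L" "rshift a q = rshift b q" for a b
  proof -
    have L: "?L > 0" "\<And>i. q (i + ?L) = q i"
      using period_len_pos period_len_periodic assms(1) by auto
    have "a \<le> a * ?L"
      using L(1) by simp
    then have shifts: "a * ?L - a + b = (b - a) + a * ?L"
      using that(1) by linarith
    have "q = rshift (a * ?L - a) (rshift a q)"
      using rshift_unshift[of ?L q, OF L] by simp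
    also have "\<dots> = rshift (b - a) (rshift (a * ?L) q)"
      by (simp add: that(3) rshift_rshift shifts)
    also have "\<dots> = rshift (b - a) q"
      by (simp add: rshift_mult_period L(2))
    finally have "\<And>i. q (i + (b - a)) = q i"
      by (metis rshift_def)
    then have "?L \<le> b - a"
      using period_len_le that(1) by simp
    then show False
      using that(1,2) by linarith
  qed
  then show ?thesis
    using assms(2-4) by (metis linorder_neqE_nat)
qed

lemma ray_equiv_refl: "ray_equiv p p"
  unfolding ray_equiv_def by blast

lemma ray_equiv_sym: "ray_equiv p q \<Longrightarrow> ray_equiv q p"
  unfolding ray_equiv_def by metis

lemma ray_equiv_trans: "ray_equiv p q \<Longrightarrow> ray_equiv q r \<Longrightarrow> ray_equiv p r"
  unfolding ray_equiv_def by (metis rshift_rshift add.commute)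

lemma ray_class_eq_iff: "ray_class p = ray_class q \<longleftrightarrow> ray_equiv p q"
  unfolding ray_class_def by (auto intro: ray_equiv_refl ray_equiv_trans ray_equiv_sym)

lemma finite_periodic_classes: "finite {ray_class p | p. periodic p \<and> period_len p \<le> d}"
proof -
  let ?ray_of = "\<lambda>w::bool list. ray_class (\<lambda>i. w ! (i mod length w))"
  have "{ray_class p | p. periodic p \<and> period_len p \<le> d}
      \<subseteq> ?ray_of ` {w. set w \<subseteq> UNIV \<and> length w \<le> d}"
  proof safe
    fix p assume p: "periodic p" "period_len p \<le> d"
    obtain w where w: "has_period_word p w" "length w = period_len p"
      using period_len_word[OF p(1)] by blast
    have "p = (\<lambda>i. w ! (i mod length w))"
      using w(1) by (auto simp: has_period_word_def)
    then show "ray_class p \<in> ?ray_of ` {w. set w \<subseteq> UNIV \<and> length w \<le> d}"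
      using p w by (intro image_eqI[of _ _ w]) auto
  qed
  moreover have "finite {w::bool list. set w \<subseteq> UNIV \<and> length w \<le> d}"
    by (rule finite_lists_length_le) simp
  ultimately show ?thesis
    by (meson finite_surj)
qed

section \<open>The atomic part\<close>

lemma submodule_Hcomp: "submodule A B (Hcomp A B)"
  unfolding Hcomp_def by (rule submodule_span_Union) (simp add: irreducible_sub_def)

lemma submodule_Hatom:
  assumes "pmodule A B"
  shows "submodule A B (Hatom A B)"
proof -
  have "Hatom A B = vec.span {\<xi> \<in> Hcomp A B. \<exists>p\<in>Collect periodic. contained A B \<xi> p}"
    by (simp add: Hatom_def)
  then show ?thesis
    using submodule_span_contained[OF assms submodule_Hcomp, of "Collect periodic"]
    by (simp add: periodic_rshift)
qed

lemma submodule_Hatom_ray: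
  assumes "pmodule A B"
  shows "submodule A B (Hatom_ray A B p)"
proof -
  have "Hatom_ray A B p = vec.span {\<xi> \<in> Hatom A B. \<exists>q\<in>range (\<lambda>k. rshift k p). contained A B \<xi> q}"
    by (simp add: Hatom_ray_def)
  moreover have "rshift 1 q \<in> range (\<lambda>k. rshift k p)" if "q \<in> range (\<lambda>k. rshift k p)" for q
    using that by (auto simp: rshift_rshift)
  ultimately show ?thesis
    using submodule_span_contained[OF assms submodule_Hatom[OF assms], of "range (\<lambda>k. rshift k p)"]
    by simp
qed

lemma Hatom_ray_subset: "Hatom_ray A B p \<subseteq> Hatom A B"
  unfolding Hatom_ray_def Hatom_def by (rule vec.span_minimal) (auto intro: vec.span_base)

lemma Hatom_ray_orthogonal:
  assumes "pmodule A B" "\<not> ray_equiv p q" "x \<in> Hatom_ray A B p" "y \<in> Hatom_ray A B q"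
  shows "cinner x y = 0"
  using assms(3,4) unfolding Hatom_ray_def
proof (rule span_orthogonal[rotated])
  fix x y
  assume "x \<in> {\<xi> \<in> Hatom A B. \<exists>k. contained A B \<xi> (rshift k p)}"
    and "y \<in> {\<xi> \<in> Hatom A B. \<exists>k. contained A B \<xi> (rshift k q)}"
  then obtain k l where "contained A B x (rshift k p)" "contained A B y (rshift l q)"
    by blast
  moreover have "rshift k p \<noteq> rshift l q"
    using assms(2) unfolding ray_equiv_def by blast
  ultimately show "cinner x y = 0"
    by (rule contained_orthogonal[OF assms(1)])
qed

lemma period_len_le_dim_Hatom:
  assumes pm: "pmodule A B" and \<xi>: "\<xi> \<in> Hcomp A B" "periodic q" "contained A B \<xi> q"
  shows "period_len q \<le> vec.dim (Hatom A B)"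
proof -
  let ?L = "period_len q"
  define f where "f m = wact A B (rprefix q m) \<xi>" for m
  have f_contained: "contained A B (f m) (rshift m q)" for m
    unfolding f_def by (rule contained_wact_rprefix[OF \<xi>(3)])
  have f_nonzero: "f m \<noteq> 0" for m
    using f_contained by (simp add: contained_def)
  have f_Hatom: "f m \<in> Hatom A B" for m
  proof -
    have "f m \<in> Hcomp A B"
      unfolding f_def by (rule submodule_wact[OF submodule_Hcomp \<xi>(1)])
    then show ?thesis
      unfolding Hatom_def using f_contained periodic_rshift[OF \<xi>(2)] by (auto intro!: vec.span_base)
  qed
  have f_orthogonal: "cinner (f m) (f m') = 0" if "m < ?L" "m' < ?L" "m \<noteq> m'" for m m'
    using contained_orthogonal[OF pm f_contained f_contained] rshift_inj_on_period[OF \<xi>(2)] that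
    by blast
  have "vec.independent (f ` {..<?L})"
    using f_orthogonal f_nonzero by (intro orthogonal_independent) auto
  then have "card (f ` {..<?L}) \<le> vec.dim (Hatom A B)"
    using f_Hatom by (intro vec.independent_card_le_dim) auto
  moreover have "inj_on f {..<?L}"
    using f_orthogonal f_nonzero by (metis inj_onI lessThan_iff cinner_self_eq_0_iff)
  ultimately show ?thesis
    by (simp add: card_image)
qed

abbreviation class_rep :: "ray set \<Rightarrow> ray" where
  "class_rep c \<equiv> SOME p. periodic p \<and> ray_class p = c"

lemma class_rep:
  assumes "c \<in> atom_classes A B"
  shows "periodic (class_rep c) \<and> ray_class (class_rep c) = c"
proof -
  have "\<exists>p. periodic p \<and> ray_class p = c"
    using assms unfolding atom_classes_def by blast
  then show ?thesis by (rule someI_ex)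
qed

lemma finite_atom_classes: "finite (atom_classes A B)"
  unfolding atom_classes_def by (rule finite_periodic_classes)

lemma Hatom_class_orthogonal:
  assumes "pmodule A B" "c \<in> atom_classes A B" "c' \<in> atom_classes A B" "c \<noteq> c'"
    "x \<in> Hatom_class A B c" "y \<in> Hatom_class A B c'"
  shows "cinner x y = 0"
proof -
  have "\<not> ray_equiv (class_rep c) (class_rep c')"
    using class_rep[OF assms(2)] class_rep[OF assms(3)] assms(4) by (simp flip: ray_class_eq_iff)
  then show ?thesis
    using Hatom_ray_orthogonal[OF assms(1)] assms(5,6) unfolding Hatom_class_def by blast
qed

lemma Hatom_eq_span_classes:
  assumes pm: "pmodule A B"
  shows "Hatom A B = vec.span (\<Union>c\<in>atom_classes A B. Hatom_class A B c)"
proof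
  show "vec.span (\<Union>c\<in>atom_classes A B. Hatom_class A B c) \<subseteq> Hatom A B"
    unfolding Hatom_class_def
    by (rule vec.span_minimal) (auto simp: Hatom_def dest: Hatom_ray_subset[THEN subsetD])
next
  show "Hatom A B \<subseteq> vec.span (\<Union>c\<in>atom_classes A B. Hatom_class A B c)"
    unfolding Hatom_def[of A B]
  proof (rule vec.span_mono, rule subsetI)
    fix \<xi> assume "\<xi> \<in> {\<xi> \<in> Hcomp A B. \<exists>p. periodic p \<and> contained A B \<xi> p}"
    then obtain q where q: "\<xi> \<in> Hcomp A B" "periodic q" "contained A B \<xi> q"
      by blast
    define c where "c = ray_class q"
    have c: "c \<in> atom_classes A B"
      unfolding atom_classes_def c_def using q period_len_le_dim_Hatom[OF pm q] by blast
    have "ray_equiv q (class_rep c)"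
      using class_rep[OF c] unfolding c_def by (simp flip: ray_class_eq_iff)
    then obtain j where "q = rshift j (class_rep c)"
      using periodic_equiv_shift[OF q(2)] by blast
    moreover have "\<xi> \<in> Hatom A B"
      unfolding Hatom_def using q by (intro vec.span_base) blast
    ultimately have "\<xi> \<in> Hatom_class A B c"
      unfolding Hatom_class_def Hatom_ray_def using q(3) by (intro vec.span_base) blast
    then show "\<xi> \<in> (\<Union>c\<in>atom_classes A B. Hatom_class A B c)"
      using c by blast
  qed
qed

lemma orth_dsum_Hatom:
  assumes "pmodule A B"
  shows "orth_dsum (Hatom A B) (atom_classes A B) (Hatom_class A B)"
  unfolding orth_dsum_def
  using Hatom_class_orthogonal[OF assms] Hatom_eq_span_classes[OF assms] by blast

section \<open>Pythagorean representations\<close>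

lemma leaf_length_le_depth: "v \<in> set (leaves t) \<Longrightarrow> length v \<le> depth t"
  by (induction t arbitrary: v) fastforce+

lemma leaf_prefix_exists: "depth t \<le> length w \<Longrightarrow> \<exists>v\<in>set (leaves t). take (length v) w = v"
proof (induction t arbitrary: w)
  case (Nd l r)
  then obtain a w' where w: "w = a # w'"
    by (cases w) auto
  show ?case
  proof (cases a)
    case True
    obtain v where "v \<in> set (leaves r)" "take (length v) w' = v"
      using Nd.IH(2)[of w'] Nd.prems w by auto
    then show ?thesis using w True by (intro bexI[of _ "True # v"]) auto
  next
    case False
    obtain v where "v \<in> set (leaves l)" "take (length v) w' = v"
      using Nd.IH(1)[of w'] Nd.prems w by auto
    then show ?thesis using w False by (intro bexI[of _ "False # v"]) auto
  qed
qed simp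

lemma take_length_Cons_eq:
  "take (length (a # u)) w = a # u \<longleftrightarrow> (\<exists>w'. w = a # w' \<and> take (length u) w' = u)"
  by (cases w) auto

lemma leaf_prefix_unique:
  "v \<in> set (leaves t) \<Longrightarrow> v' \<in> set (leaves t) \<Longrightarrow>
   take (length v) w = v \<Longrightarrow> take (length v') w = v' \<Longrightarrow> v = v'"
proof (induction t arbitrary: v v' w)
  case (Nd l r)
  from Nd.prems(1) obtain a u where
    v: "v = a # u" "(a = False \<and> u \<in> set (leaves l)) \<or> (a = True \<and> u \<in> set (leaves r))"
    by auto
  from Nd.prems(2) obtain a' u' where
    v': "v' = a' # u'" "(a' = False \<and> u' \<in> set (leaves l)) \<or> (a' = True \<and> u' \<in> set (leaves r))"
    by auto
  obtain w1 where w1: "w = a # w1" "take (length u) w1 = u"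
    using Nd.prems(3) v(1) take_length_Cons_eq by metis
  obtain w2 where w2: "w = a' # w2" "take (length u') w2 = u'"
    using Nd.prems(4) v'(1) take_length_Cons_eq by metis
  from w1(1) w2(1) have "a = a'" "w1 = w2"
    by auto
  then show ?case
    using Nd.IH v v' w1 w2 by auto
qed simp

lemma distinct_leaves: "distinct (leaves t)"
  by (induction t) (auto simp: distinct_map)

text \<open>The index chosen in \<open>gact_def\<close>; the description is only proper when
  \<open>depth t \<le> length w\<close>.\<close>
abbreviation leaf_index :: "tree \<Rightarrow> bool list \<Rightarrow> nat" where
  "leaf_index t w \<equiv> THE j. j < length (leaves t) \<and> take (length (leaves t ! j)) w = leaves t ! j"

lemma leaf_index_length:
  assumes "depth t \<le> length w"
  shows "length (leaves t ! leaf_index t w) \<le> depth t"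
proof -
  obtain v where v: "v \<in> set (leaves t)" "take (length v) w = v"
    using leaf_prefix_exists[OF assms] by blast
  then obtain j where j: "j < length (leaves t)" "leaves t ! j = v"
    by (auto simp: in_set_conv_nth)
  have "\<exists>!j. j < length (leaves t) \<and> take (length (leaves t ! j)) w = leaves t ! j"
  proof (rule ex1I[of _ j])
    fix j' assume j': "j' < length (leaves t) \<and> take (length (leaves t ! j')) w = leaves t ! j'"
    then have "leaves t ! j' = leaves t ! j"
      using leaf_prefix_unique[of "leaves t ! j'" t v w] j v by auto
    then show "j' = j"
      using j j' distinct_leaves[of t] nth_eq_iff_index_eq by blast
  qed (use j v in simp)
  from theI'[OF this] show ?thesis
    using leaf_length_le_depth by auto
qed

lemma words_Suc: "{w::bool list. length w = Suc L} = (\<lambda>(w, b). w @ [b]) ` ({w. length w = L} \<times> UNIV)"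
proof
  show "{w::bool list. length w = Suc L} \<subseteq> (\<lambda>(w, b). w @ [b]) ` ({w. length w = L} \<times> UNIV)"
  proof
    fix w :: "bool list" assume "w \<in> {w. length w = Suc L}"
    then have "w \<noteq> []" "length (butlast w) = L"
      by auto
    then show "w \<in> (\<lambda>(w, b). w @ [b]) ` ({w. length w = L} \<times> UNIV)"
      by (intro image_eqI[of _ _ "(butlast w, last w)"]) auto
  qed
qed auto

lemma expd_snoc: "fst x \<le> length w \<Longrightarrow> expd A B x (w @ [b]) = Xop A B b *v expd A B x w"
  by (simp add: expd_def wact_snoc)

definition pip_level :: "'n::finite cmat \<Rightarrow> 'n cmat \<Rightarrow> 'n elt \<Rightarrow> 'n elt \<Rightarrow> nat \<Rightarrow> complex" where
  "pip_level A B x y L = (\<Sum>w\<in>{w. length w = L}. cinner (expd A B x w) (expd A B y w))"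

lemma pip_level_Suc:
  assumes pm: "pmodule A B" and "fst x \<le> L" "fst y \<le> L"
  shows "pip_level A B x y (Suc L) = pip_level A B x y L"
proof -
  have inj: "inj_on (\<lambda>(w, b). w @ [b]) ({w::bool list. length w = L} \<times> UNIV)"
    by (auto simp: inj_on_def)
  have "pip_level A B x y (Suc L)
      = (\<Sum>w\<in>{w. length w = L}. \<Sum>b\<in>UNIV. cinner (expd A B x (w @ [b])) (expd A B y (w @ [b])))"
    unfolding pip_level_def words_Suc sum.reindex[OF inj]
    by (simp add: case_prod_unfold sum.cartesian_product)
  also have "\<dots> = pip_level A B x y L"
    unfolding pip_level_def
  proof (rule sum.cong[OF refl])
    fix w :: "bool list" assume "w \<in> {w. length w = L}"
    then have "fst x \<le> length w" "fst y \<le> length w"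
      using assms by auto
    then show "(\<Sum>b\<in>UNIV. cinner (expd A B x (w @ [b])) (expd A B y (w @ [b])))
        = cinner (expd A B x w) (expd A B y w)"
      using pmodule_cinner[OF pm, of "expd A B x w" "expd A B y w"]
      by (simp add: expd_snoc UNIV_bool add.commute)
  qed
  finally show ?thesis .
qed

lemma pip_eq_pip_level:
  assumes pm: "pmodule A B" and "max (fst x) (fst y) \<le> L"
  shows "pip A B x y = pip_level A B x y L"
  using assms(2)
proof (induction L rule: dec_induct)
  case base
  then show ?case by (simp add: pip_def pip_level_def)
next
  case (step L)
  then show ?case using pip_level_Suc[OF pm, of x L y] by simp
qed

text \<open>Representatives of the same vector \<open>[t, \<xi>]\<close> of the inductive limit are exactly those
  whose expansions agree on all sufficiently deep leaves.\<close>
definition elt_equiv :: "'n::finite cmat \<Rightarrow> 'n cmat \<Rightarrow> 'n elt \<Rightarrow> 'n elt \<Rightarrow> bool" where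
  "elt_equiv A B x y \<longleftrightarrow> (\<exists>n. \<forall>w. n \<le> length w \<longrightarrow> expd A B x w = expd A B y w)"

lemma elt_equiv_refl: "elt_equiv A B x x"
  by (auto simp: elt_equiv_def)

lemma elt_equiv_pip:
  assumes pm: "pmodule A B" and "elt_equiv A B x x'" "elt_equiv A B y y'"
  shows "pip A B x y = pip A B x' y'"
proof -
  obtain n m where
    n: "\<And>w. n \<le> length w \<Longrightarrow> expd A B x w = expd A B x' w" and
    m: "\<And>w. m \<le> length w \<Longrightarrow> expd A B y w = expd A B y' w"
    using assms(2,3) unfolding elt_equiv_def by blast
  define L where "L = n + m + fst x + fst x' + fst y + fst y'"
  have "pip A B x y = pip_level A B x y L"
    by (rule pip_eq_pip_level[OF pm]) (simp add: L_def)
  also have "\<dots> = pip_level A B x' y' L"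
    unfolding pip_level_def by (rule sum.cong) (auto simp: L_def n m)
  also have "\<dots> = pip A B x' y'"
    by (rule pip_eq_pip_level[OF pm, symmetric]) (simp add: L_def)
  finally show ?thesis .
qed

lemma elt_equiv_refine:
  assumes "fst x \<le> fst x'" "\<And>w. length w = fst x' \<Longrightarrow> snd x' w = expd A B x w"
  shows "elt_equiv A B x' x"
  unfolding elt_equiv_def
proof (intro exI allI impI)
  fix w :: "bool list" assume w: "fst x' \<le> length w"
  have "expd A B x' w = wact A B (drop (fst x') w) (expd A B x (take (fst x') w))"
    unfolding expd_def[of A B x' w] using assms(2) w by simp
  also have "\<dots> = wact A B (drop (fst x) (take (fst x') w) @ drop (fst x') w) (snd x (take (fst x) w))"
    using assms(1) by (simp add: expd_def wact_append min_def)
  also have "drop (fst x) (take (fst x') w) @ drop (fst x') w = drop (fst x) w"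
    using assms(1) w
    by (metis append_take_drop_id diff_le_self drop_drop drop_take le_add_diff_inverse2 take_drop)
  finally show "expd A B x' w = expd A B x w"
    by (simp add: expd_def)
qed

lemma elt_equiv_same_leaves:
  assumes "fst x = fst y" "\<And>w. length w = fst x \<Longrightarrow> snd x w = snd y w"
  shows "elt_equiv A B x y"
  using assms by (intro elt_equiv_refine) (auto simp: expd_def)

lemma dsq_sum_elt_equiv:
  assumes "pmodule A B"
    and "\<And>i. i \<in> I \<Longrightarrow> elt_equiv A B (a i) (b i)" "\<And>i. i \<in> I \<Longrightarrow> elt_equiv A B (c i) (d i)"
  shows "dsq (\<lambda>x y. \<Sum>i\<in>I. pip A B (x i) (y i)) a c = dsq (\<lambda>x y. \<Sum>i\<in>I. pip A B (x i) (y i)) b d"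
proof -
  have "pip A B (a i) (a i) = pip A B (b i) (b i)" "pip A B (a i) (c i) = pip A B (b i) (d i)"
    "pip A B (c i) (a i) = pip A B (d i) (b i)" "pip A B (c i) (c i) = pip A B (d i) (d i)"
    if "i \<in> I" for i
    using elt_equiv_pip[OF assms(1)] assms(2,3)[OF that] by blast+
  then show ?thesis
    unfolding dsq_def by (simp cong: sum.cong)
qed

lemma dsq_self [simp]: "dsq ip x x = 0"
  by (simp add: dsq_def)

text \<open>The words at which \<open>gact_def\<close> evaluates \<open>expd\<close> are long enough.\<close>
lemma gact_word_length:
  assumes "length w = N + depth t" "n \<le> N"
  shows "n \<le> length (u @ take (N - length u) (drop (length (leaves t ! leaf_index t w)) w))"
  using leaf_index_length[of t w] assms by simp

section \<open>Orthogonal decompositions into sub-modules\<close>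

locale orth_decomposition =
  fixes A B :: "complex^'n::finite^'n" and K :: "'n cvec set" and I :: "'i set"
    and S :: "'i \<Rightarrow> 'n cvec set"
  assumes pmodule: "pmodule A B"
    and finite_I: "finite I"
    and submodule_S: "\<And>i. i \<in> I \<Longrightarrow> submodule A B (S i)"
    and orth_dsum: "orth_dsum K I S"
begin

lemma orthogonal_S: "i \<in> I \<Longrightarrow> j \<in> I \<Longrightarrow> i \<noteq> j \<Longrightarrow> x \<in> S i \<Longrightarrow> y \<in> S j \<Longrightarrow> cinner x y = 0"
  using orth_dsum by (auto simp: orth_dsum_def)

lemma K_eq_span: "K = vec.span (\<Union>i\<in>I. S i)"
  using orth_dsum by (simp add: orth_dsum_def)

lemma subspace_S: "i \<in> I \<Longrightarrow> vec.subspace (S i)"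
  using submodule_S by (simp add: submodule_def)

lemma submodule_K: "submodule A B K"
  unfolding K_eq_span by (rule submodule_span_Union) (auto intro: submodule_S)

lemma sum_mem_K: "(\<And>j. j \<in> I \<Longrightarrow> f j \<in> S j) \<Longrightarrow> (\<Sum>j\<in>I. f j) \<in> K"
  unfolding K_eq_span by (rule vec.span_sum) (auto intro: vec.span_base)

lemma decomposition_exists:
  assumes "v \<in> K"
  shows "\<exists>f. (\<forall>j\<in>I. f j \<in> S j) \<and> v = (\<Sum>j\<in>I. f j)"
  using assms unfolding K_eq_span
proof (induction rule: vec.span_induct_alt)
  case base
  then show ?case
    using subspace_S by (intro exI[of _ "\<lambda>_. 0"]) (auto simp: vec.subspace_0)
next
  case (step c x y)
  then obtain f where f: "\<forall>j\<in>I. f j \<in> S j" "y = (\<Sum>j\<in>I. f j)"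
    by blast
  from step(1) obtain i where i: "i \<in> I" "x \<in> S i"
    by blast
  define g where "g j = (if j = i then c *s x + f j else f j)" for j
  have "(\<Sum>j\<in>I. g j) = (\<Sum>j\<in>I. (if j = i then c *s x else 0) + f j)"
    unfolding g_def by (rule sum.cong) auto
  then have "c *s x + y = (\<Sum>j\<in>I. g j)"
    using i(1) finite_I by (simp add: sum.distrib f(2))
  moreover have "\<forall>j\<in>I. g j \<in> S j"
    using f(1) i subspace_S unfolding g_def by (auto intro: vec.subspace_add vec.subspace_scale)
  ultimately show ?case
    by blast
qed

lemma decomposition_unique:
  assumes f: "\<forall>j\<in>I. f j \<in> S j" and g: "\<forall>j\<in>I. g j \<in> S j"
    and eq: "(\<Sum>j\<in>I. f j) = (\<Sum>j\<in>I. g j)" and i: "i \<in> I"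
  shows "f i = g i"
proof -
  define h where "h j = f j - g j" for j
  have h: "\<forall>j\<in>I. h j \<in> S j"
    using f g subspace_S unfolding h_def by (auto intro: vec.subspace_diff)
  have "0 = cinner (h i) (\<Sum>j\<in>I. h j)"
    using eq unfolding h_def by (simp add: sum_subtractf)
  also have "\<dots> = cinner (h i) (h i)"
    using finite_I i h orthogonal_S by (intro cinner_sum_right_single) auto
  finally show ?thesis
    unfolding h_def by simp
qed

definition component :: "'i \<Rightarrow> 'n cvec \<Rightarrow> 'n cvec" where
  "component i v = (if v \<in> K then (SOME f. (\<forall>j\<in>I. f j \<in> S j) \<and> v = (\<Sum>j\<in>I. f j)) i else 0)"

lemma component_decomposition:
  assumes "v \<in> K"
  shows "(\<forall>j\<in>I. component j v \<in> S j) \<and> v = (\<Sum>j\<in>I. component j v)"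
  using someI_ex[OF decomposition_exists[OF assms]] assms by (simp add: component_def)

lemma component_mem:
  assumes "i \<in> I"
  shows "component i v \<in> S i"
proof (cases "v \<in> K")
  case True
  then show ?thesis using component_decomposition assms by blast
next
  case False
  then show ?thesis using subspace_S[OF assms] by (simp add: component_def vec.subspace_0)
qed

lemma component_sum:
  assumes f: "\<forall>j\<in>I. f j \<in> S j" and i: "i \<in> I"
  shows "component i (\<Sum>j\<in>I. f j) = f i"
proof -
  have "(\<forall>j\<in>I. component j (sum f I) \<in> S j) \<and> sum f I = (\<Sum>j\<in>I. component j (sum f I))"
    using f by (intro component_decomposition sum_mem_K) auto
  then show ?thesis
    using decomposition_unique[OF _ f _ i] by metis
qed

lemma component_zero: "i \<in> I \<Longrightarrow> component i 0 = 0"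
  using component_sum[of "\<lambda>_. 0" i] subspace_S by (auto simp: vec.subspace_0)

lemma component_Xop:
  assumes "v \<in> K" "i \<in> I"
  shows "component i (Xop A B b *v v) = Xop A B b *v component i v"
proof -
  let ?X = "Xop A B b"
  have "v = (\<Sum>j\<in>I. component j v)"
    using component_decomposition[OF assms(1)] by blast
  then have "?X *v v = ?X *v (\<Sum>j\<in>I. component j v)"
    by (rule arg_cong)
  also have "\<dots> = (\<Sum>j\<in>I. ?X *v component j v)"
    by (rule vec.sum)
  finally have "component i (?X *v v) = component i (\<Sum>j\<in>I. ?X *v component j v)"
    by (rule arg_cong)
  also have "\<dots> = ?X *v component i v"
    using component_mem submodule_S submodule_Xop assms(2) by (intro component_sum) blast+
  finally show ?thesis .
qed

lemma component_wact: "v \<in> K \<Longrightarrow> i \<in> I \<Longrightarrow> component i (wact A B w v) = wact A B w (component i v)"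
proof (induction w arbitrary: v)
  case (Cons b w)
  then show ?case
    using component_Xop submodule_Xop[OF submodule_K] by simp
qed simp

lemma sum_cinner_components:
  assumes "u \<in> K" "v \<in> K"
  shows "(\<Sum>i\<in>I. cinner (component i u) (component i v)) = cinner u v"
proof -
  have "u = (\<Sum>i\<in>I. component i u)" "v = (\<Sum>j\<in>I. component j v)"
    using component_decomposition assms by blast+
  then have "cinner u v = cinner (\<Sum>i\<in>I. component i u) (\<Sum>j\<in>I. component j v)"
    by (rule arg_cong2)
  also have "\<dots> = (\<Sum>i\<in>I. cinner (component i u) (\<Sum>j\<in>I. component j v))"
    by (rule cinner_sum_left)
  also have "\<dots> = (\<Sum>i\<in>I. cinner (component i u) (component i v))"
    using finite_I component_mem orthogonal_S by (intro sum.cong cinner_sum_right_single) auto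
  finally show ?thesis ..
qed

definition split_elt :: "'n elt \<Rightarrow> 'i \<Rightarrow> 'n elt" where
  "split_elt x i = (fst x, \<lambda>w. component i (snd x w))"

lemma split_elt_PiD: "i \<in> I \<Longrightarrow> split_elt x i \<in> PiD (S i)"
  unfolding PiD_def split_elt_def using component_mem by auto

lemma expd_mem: "x \<in> PiD K \<Longrightarrow> fst x \<le> length w \<Longrightarrow> expd A B x w \<in> K"
  unfolding expd_def PiD_def by (auto intro!: submodule_wact[OF submodule_K])

lemma component_expd:
  "x \<in> PiD K \<Longrightarrow> fst x \<le> length w \<Longrightarrow> i \<in> I \<Longrightarrow> component i (expd A B x w) = expd A B (split_elt x i) w"
  unfolding expd_def split_elt_def PiD_def by (auto intro!: component_wact)

abbreviation sum_pip :: "('i \<Rightarrow> 'n elt) \<Rightarrow> ('i \<Rightarrow> 'n elt) \<Rightarrow> complex" where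
  "sum_pip \<equiv> \<lambda>x y. \<Sum>i\<in>I. pip A B (x i) (y i)"

lemma sum_pip_split_elt:
  assumes x: "x \<in> PiD K" and y: "y \<in> PiD K"
  shows "sum_pip (split_elt x) (split_elt y) = pip A B x y"
proof -
  let ?W = "{w. length w = max (fst x) (fst y)}"
  have "sum_pip (split_elt x) (split_elt y)
      = (\<Sum>i\<in>I. \<Sum>w\<in>?W. cinner (component i (expd A B x w)) (component i (expd A B y w)))"
    unfolding pip_def Let_def
    by (intro sum.cong refl) (auto simp: split_elt_def component_expd[OF x] component_expd[OF y])
  also have "\<dots> = (\<Sum>w\<in>?W. \<Sum>i\<in>I. cinner (component i (expd A B x w)) (component i (expd A B y w)))"
    by (rule sum.swap)
  also have "\<dots> = pip A B x y"
    unfolding pip_def Let_def by (intro sum.cong refl sum_cinner_components) (auto intro!: expd_mem x y)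
  finally show ?thesis .
qed

lemma dsq_split_elt: "x \<in> PiD K \<Longrightarrow> y \<in> PiD K \<Longrightarrow> dsq sum_pip (split_elt x) (split_elt y) = dsq (pip A B) x y"
  unfolding dsq_def by (simp add: sum_pip_split_elt)

lemma split_elt_pop:
  assumes x: "x \<in> PiD K" and i: "i \<in> I"
  shows "elt_equiv A B (split_elt (pop A B \<gamma> x) i) (pop A B \<gamma> (split_elt x i))"
proof (cases \<gamma>)
  case (CGen b)
  show ?thesis
    unfolding CGen pop_def by (rule elt_equiv_same_leaves) (auto simp: sstar_def split_elt_def component_zero[OF i])
next
  case (GElt s t \<kappa>)
  have wact_expd: "component i (wact A B u (expd A B x v)) = wact A B u (expd A B (split_elt x i) v)"
    if "fst x \<le> length v" for u v
    using that by (simp add: component_wact expd_mem component_expd x i)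
  show ?thesis
    unfolding GElt pop_def gen.case
  proof (rule elt_equiv_same_leaves)
    show "fst (split_elt (gact A B s t \<kappa> x) i) = fst (gact A B s t \<kappa> (split_elt x i))"
      by (simp add: gact_def Let_def split_elt_def)
    fix w :: "bool list"
    assume "length w = fst (split_elt (gact A B s t \<kappa> x) i)"
    then have w: "length w = max (fst x) (depth s) + depth t"
      by (simp add: gact_def Let_def split_elt_def)
    show "snd (split_elt (gact A B s t \<kappa> x) i) w = snd (gact A B s t \<kappa> (split_elt x i)) w"
      unfolding gact_def Let_def split_elt_def snd_conv fst_conv
      by (rule wact_expd[unfolded split_elt_def], rule gact_word_length[OF w], simp)
  qed
qed

lemma split_elt_surj:
  assumes y: "\<forall>i\<in>I. y i \<in> PiD (S i)"
  shows "\<exists>x. x \<in> PiD K \<and> (\<forall>i\<in>I. elt_equiv A B (split_elt x i) (y i))"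
proof -
  define N where "N = (\<Sum>j\<in>I. fst (y j))"
  define x where "x = (N, \<lambda>w. \<Sum>j\<in>I. expd A B (y j) w)"
  have N: "fst (y j) \<le> N" if "j \<in> I" for j
    unfolding N_def using finite_I that by (intro member_le_sum) auto
  have expd_S: "\<forall>j\<in>I. expd A B (y j) w \<in> S j" if "length w = N" for w
    using y N that unfolding expd_def PiD_def by (auto intro!: submodule_wact[OF submodule_S])
  have "x \<in> PiD K"
    unfolding PiD_def x_def using expd_S sum_mem_K by auto
  moreover have "elt_equiv A B (split_elt x i) (y i)" if i: "i \<in> I" for i
  proof (rule elt_equiv_refine)
    show "fst (y i) \<le> fst (split_elt x i)"
      using N[OF i] by (simp add: split_elt_def x_def)
    fix w :: "bool list" assume "length w = fst (split_elt x i)"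
    then show "snd (split_elt x i) w = expd A B (y i) w"
      using component_sum[OF expd_S i] by (simp add: split_elt_def x_def)
  qed
  ultimately show ?thesis
    by blast
qed

text \<open>The intertwining holds for every generator.\<close>
theorem Pi_equiv_sum: "Pi_equiv_sum A B X K I S"
  unfolding Pi_equiv_sum_def unit_equiv_def
proof (intro exI[of _ "\<lambda>X k. split_elt (X k)"] conjI allI impI ballI)
  fix X assume X: "cauchy_in (PiD K) (pip A B) X"
  then have XK: "\<And>k. X k \<in> PiD K"
    by (simp add: cauchy_in_def)
  show "cauchy_in {x. \<forall>i\<in>I. x i \<in> PiD (S i)} sum_pip (\<lambda>k. split_elt (X k))"
    using X unfolding cauchy_in_def by (simp add: split_elt_PiD dsq_split_elt XK)
  fix g
  have "dsq sum_pip (split_elt (pop A B g (X k))) (\<lambda>i. pop A B g (split_elt (X k) i))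
      = dsq sum_pip (\<lambda>i. pop A B g (split_elt (X k) i)) (\<lambda>i. pop A B g (split_elt (X k) i))" for k
    by (rule dsq_sum_elt_equiv[OF pmodule split_elt_pop[OF XK] elt_equiv_refl])
  then show "ceq sum_pip (\<lambda>k. split_elt (pop A B g (X k))) (\<lambda>k i. pop A B g (split_elt (X k) i))"
    unfolding ceq_def by simp
next
  fix X Y assume "cauchy_in (PiD K) (pip A B) X" "cauchy_in (PiD K) (pip A B) Y"
  then show "cip sum_pip (\<lambda>k. split_elt (X k)) (\<lambda>k. split_elt (Y k)) = cip (pip A B) X Y"
    unfolding cip_def cauchy_in_def by (simp add: sum_pip_split_elt)
next
  fix Y assume Y: "cauchy_in {x. \<forall>i\<in>I. x i \<in> PiD (S i)} sum_pip Y"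
  then have "\<forall>k. \<exists>x. x \<in> PiD K \<and> (\<forall>i\<in>I. elt_equiv A B (split_elt x i) (Y k i))"
    using split_elt_surj unfolding cauchy_in_def by blast
  then obtain X where XK: "\<And>k. X k \<in> PiD K"
    and equiv: "\<And>k i. i \<in> I \<Longrightarrow> elt_equiv A B (split_elt (X k) i) (Y k i)"
    by metis
  have dsq_XY: "dsq sum_pip (split_elt (X k)) (Y k) = dsq sum_pip (Y k) (Y k)" for k
    by (rule dsq_sum_elt_equiv[OF pmodule equiv elt_equiv_refl])
  have "dsq sum_pip (split_elt (X m)) (split_elt (X n)) = dsq sum_pip (Y m) (Y n)" for m n
    by (rule dsq_sum_elt_equiv[OF pmodule equiv equiv])
  then have "dsq (pip A B) (X m) (X n) = dsq sum_pip (Y m) (Y n)" for m n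
    using dsq_split_elt[OF XK XK] by simp
  then have "cauchy_in (PiD K) (pip A B) X"
    using Y XK unfolding cauchy_in_def by simp
  moreover have "ceq sum_pip (\<lambda>k. split_elt (X k)) Y"
    unfolding ceq_def using dsq_XY by simp
  ultimately show "\<exists>X. cauchy_in (PiD K) (pip A B) X \<and> ceq sum_pip (\<lambda>k. split_elt (X k)) Y"
    by blast
qed

end

theorem proposition2p16:
  fixes A B :: "complex^'n::finite^'n" and X :: kind
  assumes "pmodule A B"
  shows "orth_dsum (Hatom A B) (atom_classes A B) (Hatom_class A B) \<and>
         Pi_equiv_sum A B X (Hatom A B) (atom_classes A B) (Hatom_class A B)"
proof
  show orth: "orth_dsum (Hatom A B) (atom_classes A B) (Hatom_class A B)"
    using orth_dsum_Hatom[OF assms] .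
  interpret orth_decomposition A B "Hatom A B" "atom_classes A B" "Hatom_class A B"
    using assms finite_atom_classes orth
    by unfold_locales (simp_all add: Hatom_class_def submodule_Hatom_ray)
  show "Pi_equiv_sum A B X (Hatom A B) (atom_classes A B) (Hatom_class A B)"
    by (rule Pi_equiv_sum)
qed

end
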